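(* Let $G$ be a finite group, $U$ a $G$-universe, and $H\le G$. A finite $H$-set $T$ is admissible for the little disks operad $\mathcal D(U)$ if and only if there exists an injective $H$-equivariant map $T\to U$.
   Context: A $G$-universe $U$ is a countably infinite-dimensional real inner product space with an action of $G$ by isometries, which contains the trivial representation and contains each of its finite-dimensional subrepresentations infinitely often (it need not contain every representation). For a finite-dimensional subrepresentation $V\subset U$ with unit disk $D(V)$, a little disk is an affine map $D(V)\to D(V)$, $v\mapsto av+b$ with $a>0$; $\mathcal D_V(U)_n$ is the space of $n$-tuples of little disks with pairwise disjoint images, with $G$ acting by conjugation and $\Sigma_n$ by permutation. For $V\subseteq W$ the disk $v\mapsto av+b$ is sent to $w\mapsto aw+b$, and the little disks operad is $\mathcal D(U)=\operatorname{colim}_V\mathcal D_V(U)$ with operad structure from composition. For a finite $H$-set $T$ with $|T|=n$, choosing $T\cong\{1,\dots,n\}$ gives a homomorphism $H\to\Sigma_n$ with graph $\Gamma_T\le G\times\Sigma_n$; $T$ is admissible for $\mathcal O$ if $\mathcal O_n^{\Gamma_T}\neq\emptyset$. *)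

theory Defs
  imports "HOL-Analysis.Analysis" "HOL-Algebra.Group_Action"
begin

definition isometric_linear_action :: "('g, 'm) monoid_scheme \<Rightarrow> ('g \<Rightarrow> 'u::real_inner \<Rightarrow> 'u) \<Rightarrow> bool" where
  "isometric_linear_action G \<rho> \<longleftrightarrow>
     \<rho> \<one>\<^bsub>G\<^esub> = id \<and>
     (\<forall>g\<in>carrier G. \<forall>h\<in>carrier G. \<rho> (g \<otimes>\<^bsub>G\<^esub> h) = \<rho> g \<circ> \<rho> h) \<and>
     (\<forall>g\<in>carrier G. linear (\<rho> g) \<and> (\<forall>x. norm (\<rho> g x) = norm x))"

definition countably_infinite_dim :: "'u::real_vector itself \<Rightarrow> bool" where
  "countably_infinite_dim _ \<longleftrightarrow>
     (\<exists>B::'u set. independent B \<and> span B = UNIV \<and> countable B \<and> infinite B)"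

definition fin_dim_subspace :: "'u::real_vector set \<Rightarrow> bool" where
  "fin_dim_subspace V \<longleftrightarrow> (\<exists>B. finite B \<and> V = span B)"

definition fin_subrep :: "('g, 'm) monoid_scheme \<Rightarrow> ('g \<Rightarrow> 'u::real_inner \<Rightarrow> 'u) \<Rightarrow> 'u set \<Rightarrow> bool" where
  "fin_subrep G \<rho> V \<longleftrightarrow> fin_dim_subspace V \<and> (\<forall>g\<in>carrier G. \<rho> g ` V \<subseteq> V)"

definition rep_iso :: "('g, 'm) monoid_scheme \<Rightarrow> ('g \<Rightarrow> 'u::real_inner \<Rightarrow> 'u) \<Rightarrow> 'u set \<Rightarrow> 'u set \<Rightarrow> bool" where
  "rep_iso G \<rho> V W \<longleftrightarrow>
     (\<exists>f. linear f \<and> bij_betw f V W \<and> (\<forall>g\<in>carrier G. \<forall>v\<in>V. f (\<rho> g v) = \<rho> g (f v)))"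

definition G_universe :: "('g, 'm) monoid_scheme \<Rightarrow> ('g \<Rightarrow> 'u::real_inner \<Rightarrow> 'u) \<Rightarrow> bool" where
  "G_universe G \<rho> \<longleftrightarrow>
     countably_infinite_dim TYPE('u) \<and>
     isometric_linear_action G \<rho> \<and>
     (\<exists>v. v \<noteq> 0 \<and> (\<forall>g\<in>carrier G. \<rho> g v = v)) \<and>
     (\<forall>V. fin_subrep G \<rho> V \<longrightarrow>
        (\<exists>W :: nat \<Rightarrow> 'u set. (\<forall>k. fin_subrep G \<rho> (W k) \<and> rep_iso G \<rho> V (W k)) \<and>
           (\<forall>i j. i \<noteq> j \<longrightarrow> (\<forall>x\<in>W i. \<forall>y\<in>W j. inner x y = 0))))"

definition unit_disk :: "'u::real_normed_vector set \<Rightarrow> 'u set" where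
  "unit_disk V = {v \<in> V. norm v \<le> 1}"

text \<open>A little disk v \<mapsto> a v + b is recorded by its parameters (a, b).\<close>
definition disk_image :: "'u::real_normed_vector set \<Rightarrow> real \<times> 'u \<Rightarrow> 'u set" where
  "disk_image V d = (\<lambda>v. fst d *\<^sub>R v + snd d) ` unit_disk V"

definition little_disk :: "'u::real_normed_vector set \<Rightarrow> real \<times> 'u \<Rightarrow> bool" where
  "little_disk V d \<longleftrightarrow> fst d > 0 \<and> disk_image V d \<subseteq> unit_disk V"

definition DV :: "'u::real_normed_vector set \<Rightarrow> nat \<Rightarrow> (real \<times> 'u) list set" where
  "DV V n = {c. length c = n \<and> (\<forall>i<n. little_disk V (c ! i)) \<and>
               (\<forall>i<n. \<forall>j<n. i \<noteq> j \<longrightarrow> disk_image V (c ! i) \<inter> disk_image V (c ! j) = {})}"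

text \<open>D(U)_n = colim_V D_V(U)_n. Since the structure maps for V \<subseteq> W keep the parameters
(a,b) and are injective, the colimit (as a set) is the union.\<close>
definition DU :: "('g, 'm) monoid_scheme \<Rightarrow> ('g \<Rightarrow> 'u::real_inner \<Rightarrow> 'u) \<Rightarrow> nat \<Rightarrow> (real \<times> 'u) list set" where
  "DU G \<rho> n = (\<Union>V\<in>{V. fin_subrep G \<rho> V}. DV V n)"

text \<open>Action of (g, sigma) in G \<times> Sigma_n: g acts by conjugation,
g(v \<mapsto> a v + b)g^{-1} = (v \<mapsto> a v + g b), sigma permutes the entries.\<close>
definition act_GSigma :: "('g \<Rightarrow> 'u::real_inner \<Rightarrow> 'u) \<Rightarrow> 'g \<Rightarrow> (nat \<Rightarrow> nat) \<Rightarrow> (real \<times> 'u) list \<Rightarrow> (real \<times> 'u) list" where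
  "act_GSigma \<rho> g \<sigma> c =
     map (\<lambda>j. let d = c ! (inv_into {..<length c} \<sigma> j) in (fst d, \<rho> g (snd d))) [0..<length c]"

definition perm_of :: "'t set \<Rightarrow> ('t \<Rightarrow> nat) \<Rightarrow> ('g \<Rightarrow> 't \<Rightarrow> 't) \<Rightarrow> 'g \<Rightarrow> nat \<Rightarrow> nat" where
  "perm_of T e \<phi> h = (\<lambda>i. if i < card T then e (\<phi> h (inv_into T e i)) else i)"

definition Gamma_T :: "'g set \<Rightarrow> 't set \<Rightarrow> ('t \<Rightarrow> nat) \<Rightarrow> ('g \<Rightarrow> 't \<Rightarrow> 't) \<Rightarrow> ('g \<times> (nat \<Rightarrow> nat)) set" where
  "Gamma_T H T e \<phi> = {(h, perm_of T e \<phi> h) | h. h \<in> H}"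

text \<open>T is admissible for D(U) iff D(U)_n^{Gamma_T} is nonempty, for a choice of
identification T \<cong> {0..<n} (the condition is independent of this choice).\<close>
definition admissible_DU :: "('g, 'm) monoid_scheme \<Rightarrow> ('g \<Rightarrow> 'u::real_inner \<Rightarrow> 'u) \<Rightarrow> 'g set \<Rightarrow> 't set \<Rightarrow> ('g \<Rightarrow> 't \<Rightarrow> 't) \<Rightarrow> bool" where
  "admissible_DU G \<rho> H T \<phi> \<longleftrightarrow>
     (\<exists>e. bij_betw e T {..<card T} \<and>
        (\<exists>c \<in> DU G \<rho> (card T). \<forall>(h, \<sigma>) \<in> Gamma_T H T e \<phi>. act_GSigma \<rho> h \<sigma> c = c))"

end

theory Submission
  imports Defs
begin

text \<open>A configuration of little disks is fixed by the graph \<open>\<Gamma>\<^sub>T\<close> exactly when \<open>h\<close>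
  carries the disk labelled \<open>t\<close> to the disk labelled \<open>h t\<close> (same radius, centre moved by
  \<open>\<rho> h\<close>). Hence the centres of a fixed configuration form an \<open>H\<close>-equivariant map
  \<open>T \<rightarrow> U\<close>, injective because the disks are disjoint. Conversely, an equivariant injection,
  scaled into the ball of radius \<open>1/2\<close>, provides the centres of equal disks of radius less
  than half the minimal distance between its values; they live in the span of the \<open>G\<close>-orbits
  of these values, a finite-dimensional subrepresentation because \<open>G\<close> is finite.\<close>

lemma perm_of_apply:
  assumes "bij_betw e T {..<card T}" and "t \<in> T"
  shows "perm_of T e \<phi> h (e t) = e (\<phi> h t)"
  using assms bij_betwE[OF assms(1)] by (simp add: perm_of_def bij_betw_def)

lemma bij_betw_perm_of:
  assumes e: "bij_betw e T {..<card T}" and "bij_betw (\<phi> h) T T"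
  shows "bij_betw (perm_of T e \<phi> h) {..<card T} {..<card T}"
proof -
  have "bij_betw (e \<circ> \<phi> h \<circ> inv_into T e) {..<card T} {..<card T}"
    by (meson assms bij_betw_inv_into bij_betw_trans)
  then show ?thesis
    by (rule bij_betw_cong[THEN iffD1, rotated]) (simp add: perm_of_def)
qed

lemma length_act_GSigma [simp]: "length (act_GSigma \<rho> g \<sigma> c) = length c"
  by (simp add: act_GSigma_def)

lemma nth_act_GSigma:
  "j < length c \<Longrightarrow> act_GSigma \<rho> g \<sigma> c ! j =
     (fst (c ! inv_into {..<length c} \<sigma> j), \<rho> g (snd (c ! inv_into {..<length c} \<sigma> j)))"
  by (simp add: act_GSigma_def Let_def)

lemma act_GSigma_fixed_iff:
  assumes \<sigma>: "bij_betw \<sigma> {..<length c} {..<length c}"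
  shows "act_GSigma \<rho> g \<sigma> c = c \<longleftrightarrow>
         (\<forall>i<length c. c ! \<sigma> i = (fst (c ! i), \<rho> g (snd (c ! i))))"
proof -
  let ?n = "length c" and ?F = "\<lambda>d. (fst d, \<rho> g (snd d))"
  have reindex: "(\<forall>j<?n. Q j) \<longleftrightarrow> (\<forall>i<?n. Q (\<sigma> i))" for Q
    using \<sigma> unfolding bij_betw_def by (metis image_eqI imageE lessThan_iff)
  have inv: "inv_into {..<?n} \<sigma> (\<sigma> i) = i" if "i < ?n" for i
    using \<sigma> that by (simp add: bij_betw_def)
  have "act_GSigma \<rho> g \<sigma> c = c \<longleftrightarrow> (\<forall>j<?n. c ! j = ?F (c ! inv_into {..<?n} \<sigma> j))"
    by (auto simp: list_eq_iff_nth_eq nth_act_GSigma)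
  also have "\<dots> \<longleftrightarrow> (\<forall>i<?n. c ! \<sigma> i = ?F (c ! i))"
    by (subst reindex) (simp add: inv)
  finally show ?thesis .
qed

lemma Gamma_T_fixed_iff:
  assumes e: "bij_betw e T {..<card T}" and \<phi>: "\<forall>h\<in>H. bij_betw (\<phi> h) T T"
    and len: "length c = card T"
  shows "(\<forall>(h, \<sigma>) \<in> Gamma_T H T e \<phi>. act_GSigma \<rho> h \<sigma> c = c) \<longleftrightarrow>
         (\<forall>h\<in>H. \<forall>t\<in>T. c ! e (\<phi> h t) = (fst (c ! e t), \<rho> h (snd (c ! e t))))"
proof -
  have "act_GSigma \<rho> h (perm_of T e \<phi> h) c = c \<longleftrightarrow>
        (\<forall>t\<in>T. c ! e (\<phi> h t) = (fst (c ! e t), \<rho> h (snd (c ! e t))))" if h: "h \<in> H" for h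
  proof -
    have "{..<card T} = e ` T" using e by (simp add: bij_betw_def)
    then have "(\<forall>i<card T. P i) \<longleftrightarrow> (\<forall>t\<in>T. P (e t))" for P
      by (metis image_eqI imageE lessThan_iff)
    then show ?thesis
      using act_GSigma_fixed_iff[of "perm_of T e \<phi> h" c]
        bij_betw_perm_of[of e T \<phi> h, OF e bspec[OF \<phi> h]]
      by (simp add: len perm_of_apply[OF e])
  qed
  then show ?thesis by (auto simp: Gamma_T_def)
qed

lemma fin_subrep_subspace: "fin_subrep G \<rho> V \<Longrightarrow> subspace V"
  by (auto simp: fin_subrep_def fin_dim_subspace_def)

lemma center_in_disk_image:
  assumes "subspace V"
  shows "snd d \<in> disk_image V d"
proof -
  have "0 \<in> unit_disk V" using assms by (simp add: unit_disk_def subspace_0)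
  then have "fst d *\<^sub>R 0 + snd d \<in> disk_image V d" unfolding disk_image_def by blast
  then show ?thesis by simp
qed

lemma DV_centers_distinct:
  assumes "c \<in> DV V n" and "subspace V" and "i < n" and "j < n" and "i \<noteq> j"
  shows "snd (c ! i) \<noteq> snd (c ! j)"
proof -
  have "disk_image V (c ! i) \<inter> disk_image V (c ! j) = {}"
    using assms by (simp add: DV_def)
  moreover have "snd (c ! i) \<in> disk_image V (c ! i)" "snd (c ! j) \<in> disk_image V (c ! j)"
    using center_in_disk_image[OF assms(2)] by auto
  ultimately show ?thesis by auto
qed

lemma little_disk_at:
  assumes "subspace V" and "b \<in> V" and "0 < r" and "r + norm b \<le> 1"
  shows "little_disk V (r, b)"
proof -
  have "r *\<^sub>R v + b \<in> unit_disk V" if "v \<in> V" "norm v \<le> 1" for v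
  proof -
    have "norm (r *\<^sub>R v + b) \<le> r * norm v + norm b"
      using norm_triangle_ineq[of "r *\<^sub>R v" b] assms(3) by simp
    also have "\<dots> \<le> 1" using that assms(3,4) mult_left_le[of "norm v" r] by linarith
    finally show ?thesis
      using that assms(1,2) by (simp add: unit_disk_def subspace_add subspace_scale)
  qed
  then show ?thesis using assms(3) by (auto simp: little_disk_def disk_image_def unit_disk_def)
qed

lemma disk_images_disjoint:
  assumes "0 \<le> r" and "2 * r < norm (b - b')"
  shows "disk_image V (r, b) \<inter> disk_image V (r, b') = {}"
proof (rule ccontr)
  assume "disk_image V (r, b) \<inter> disk_image V (r, b') \<noteq> {}"
  then obtain v w where "norm v \<le> 1" "norm w \<le> 1" and eq: "r *\<^sub>R v + b = r *\<^sub>R w + b'"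
    by (auto simp: disk_image_def unit_disk_def)
  have "b - b' = r *\<^sub>R (w - v)" using eq by (simp add: algebra_simps)
  then have "norm (b - b') = r * norm (w - v)" using assms(1) by simp
  also have "\<dots> \<le> r * 2"
    using norm_triangle_ineq4[of w v] \<open>norm v \<le> 1\<close> \<open>norm w \<le> 1\<close> assms(1)
    by (intro mult_left_mono) auto
  finally show False using assms by linarith
qed

lemma equal_disks_in_DV:
  assumes V: "subspace V" and r: "0 < r" "r \<le> 1/2"
    and b: "\<And>i. i < n \<Longrightarrow> b i \<in> V \<and> norm (b i) \<le> 1/2"
    and sep: "\<And>i j. i < n \<Longrightarrow> j < n \<Longrightarrow> i \<noteq> j \<Longrightarrow> 2 * r < norm (b i - b j)"
  shows "map (\<lambda>i. (r, b i)) [0..<n] \<in> DV V n"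
  unfolding DV_def
proof (intro CollectI conjI allI impI)
  show "length (map (\<lambda>i. (r, b i)) [0..<n]) = n" by simp
  show "little_disk V (map (\<lambda>i. (r, b i)) [0..<n] ! i)" if "i < n" for i
    using little_disk_at[OF V _ r(1), of "b i"] b[OF that] r(2) that by simp
  show "disk_image V (map (\<lambda>i. (r, b i)) [0..<n] ! i) \<inter>
        disk_image V (map (\<lambda>i. (r, b i)) [0..<n] ! j) = {}"
    if "i < n" "j < n" "i \<noteq> j" for i j
    using disk_images_disjoint[OF less_imp_le[OF r(1)] sep[OF that]] that by simp
qed

lemma subset_span_orbits:
  assumes "group G" and "isometric_linear_action G \<rho>"
  shows "X \<subseteq> span ((\<lambda>(g, x). \<rho> g x) ` (carrier G \<times> X))"
proof
  fix x assume "x \<in> X"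
  have "\<rho> \<one>\<^bsub>G\<^esub> = id" using assms(2) by (simp add: isometric_linear_action_def)
  moreover have "\<one>\<^bsub>G\<^esub> \<in> carrier G" by (rule monoid.one_closed[OF group.is_monoid[OF assms(1)]])
  ultimately have "x \<in> (\<lambda>(g, x). \<rho> g x) ` (carrier G \<times> X)"
    using \<open>x \<in> X\<close> by (auto intro!: image_eqI[where x = "(\<one>\<^bsub>G\<^esub>, x)"])
  then show "x \<in> span ((\<lambda>(g, x). \<rho> g x) ` (carrier G \<times> X))" by (rule span_base)
qed

lemma finite_set_separated:
  fixes S :: "'a::metric_space set"
  assumes "finite S"
  shows "\<exists>\<delta>>0. \<forall>x\<in>S. \<forall>y\<in>S. x \<noteq> y \<longrightarrow> \<delta> \<le> dist x y"
proof -
  define D where "D = insert 1 ((\<lambda>(x, y). dist x y) ` {(x, y) \<in> S \<times> S. x \<noteq> y})"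
  have "finite D" unfolding D_def using assms by (auto intro: finite_subset[of _ "S \<times> S"])
  have "Min D > 0" using \<open>finite D\<close> by (subst Min_gr_iff) (auto simp: D_def)
  moreover have "Min D \<le> dist x y" if "x \<in> S" "y \<in> S" "x \<noteq> y" for x y
    using \<open>finite D\<close> that by (intro Min_le) (auto simp: D_def)
  ultimately show ?thesis by blast
qed

lemma fin_subrep_span_orbits:
  assumes "group G" and "finite (carrier G)" and \<rho>: "isometric_linear_action G \<rho>"
    and "finite X"
  shows "fin_subrep G \<rho> (span ((\<lambda>(g, x). \<rho> g x) ` (carrier G \<times> X)))"
proof -
  let ?B = "(\<lambda>(g, x). \<rho> g x) ` (carrier G \<times> X)"
  have "\<rho> g ` span ?B \<subseteq> span ?B" if g: "g \<in> carrier G" for g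
  proof -
    have "\<rho> g y \<in> ?B" if "y \<in> ?B" for y
    proof -
      obtain g' x where g': "g' \<in> carrier G" and "x \<in> X" and y: "y = \<rho> g' x"
        using \<open>y \<in> ?B\<close> by auto
      have "\<rho> g y = \<rho> (g \<otimes>\<^bsub>G\<^esub> g') x"
        using \<rho> g g' y by (simp add: isometric_linear_action_def)
      moreover have "g \<otimes>\<^bsub>G\<^esub> g' \<in> carrier G"
        using g g' by (rule monoid.m_closed[OF group.is_monoid[OF \<open>group G\<close>]])
      ultimately show ?thesis
        using \<open>x \<in> X\<close> by (auto intro!: image_eqI[where x = "(g \<otimes>\<^bsub>G\<^esub> g', x)"])
    qed
    then have "span (\<rho> g ` ?B) \<subseteq> span ?B" by (intro span_mono) blast
    moreover have "linear (\<rho> g)" using \<rho> g by (simp add: isometric_linear_action_def)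
    ultimately show ?thesis by (simp add: linear_span_image)
  qed
  moreover have "finite ?B" using assms(2,4) by simp
  ultimately show ?thesis unfolding fin_subrep_def fin_dim_subspace_def by blast
qed

lemma equivariant_injection_of_admissible:
  assumes "admissible_DU G \<rho> H T \<phi>" and "\<forall>h\<in>H. bij_betw (\<phi> h) T T"
  shows "\<exists>f. inj_on f T \<and> (\<forall>h\<in>H. \<forall>t\<in>T. f (\<phi> h t) = \<rho> h (f t))"
proof -
  obtain e c where e: "bij_betw e T {..<card T}" and "c \<in> DU G \<rho> (card T)"
    and fixed: "\<forall>(h, \<sigma>) \<in> Gamma_T H T e \<phi>. act_GSigma \<rho> h \<sigma> c = c"
    using assms(1) unfolding admissible_DU_def by blast
  then obtain V where "fin_subrep G \<rho> V" and c: "c \<in> DV V (card T)"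
    unfolding DU_def by blast
  have V: "subspace V" using \<open>fin_subrep G \<rho> V\<close> by (rule fin_subrep_subspace)
  have len: "length c = card T" using c by (simp add: DV_def)
  define f where "f t = snd (c ! e t)" for t
  have "inj_on f T"
  proof (rule inj_onI)
    fix s t assume "s \<in> T" "t \<in> T" "f s = f t"
    have "e s < card T" "e t < card T" using \<open>s \<in> T\<close> \<open>t \<in> T\<close> e by (auto dest: bij_betwE)
    then have "e s = e t" using DV_centers_distinct[OF c V] \<open>f s = f t\<close> unfolding f_def by blast
    then show "s = t" using e \<open>s \<in> T\<close> \<open>t \<in> T\<close> by (auto simp: bij_betw_def inj_on_eq_iff)
  qed
  moreover have "\<forall>h\<in>H. \<forall>t\<in>T. c ! e (\<phi> h t) = (fst (c ! e t), \<rho> h (snd (c ! e t)))"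
    using fixed by (rule iffD1[OF Gamma_T_fixed_iff[OF e assms(2) len]])
  then have "\<forall>h\<in>H. \<forall>t\<in>T. f (\<phi> h t) = \<rho> h (f t)" by (simp add: f_def)
  ultimately show ?thesis by blast
qed

lemma equivariant_injection_into_half_ball:
  assumes "finite T" and "inj_on f T"
    and f: "\<And>h t. h \<in> H \<Longrightarrow> t \<in> T \<Longrightarrow> f (\<phi> h t) = \<rho> h (f t)"
    and lin: "\<And>h. h \<in> H \<Longrightarrow> linear (\<rho> h)"
  shows "\<exists>p. inj_on p T \<and> (\<forall>h\<in>H. \<forall>t\<in>T. p (\<phi> h t) = \<rho> h (p t)) \<and>
             (\<forall>t\<in>T. norm (p t) \<le> 1/2)"
proof -
  define K where "K = Max (insert 1 ((\<lambda>t. norm (f t)) ` T))"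
  have K: "1 \<le> K" "\<And>t. t \<in> T \<Longrightarrow> norm (f t) \<le> K"
    unfolding K_def using assms(1) by auto
  define p where "p t = (1 / (2 * K)) *\<^sub>R f t" for t
  have "inj_on p T" using assms(2) K(1) by (auto simp: p_def inj_on_def)
  moreover have "p (\<phi> h t) = \<rho> h (p t)" if "h \<in> H" "t \<in> T" for h t
    using that f lin by (simp add: p_def linear_cmul)
  moreover have "norm (p t) \<le> 1/2" if "t \<in> T" for t
    using K(1) K(2)[OF that] by (simp add: p_def field_simps)
  ultimately show ?thesis by blast
qed

lemma admissible_of_equivariant_injection:
  assumes "group G" and "finite (carrier G)" and \<rho>: "isometric_linear_action G \<rho>"
    and H: "H \<subseteq> carrier G" and "finite T" and \<phi>: "\<forall>h\<in>H. bij_betw (\<phi> h) T T"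
    and "inj_on f T" and "\<And>h t. h \<in> H \<Longrightarrow> t \<in> T \<Longrightarrow> f (\<phi> h t) = \<rho> h (f t)"
  shows "admissible_DU G \<rho> H T \<phi>"
proof -
  have lin: "linear (\<rho> h)" if "h \<in> H" for h
    using \<rho> H that by (auto simp: isometric_linear_action_def)
  obtain p where p_inj: "inj_on p T"
    and p_equiv: "\<forall>h\<in>H. \<forall>t\<in>T. p (\<phi> h t) = \<rho> h (p t)"
    and p_small: "\<forall>t\<in>T. norm (p t) \<le> 1/2"
    using equivariant_injection_into_half_ball[of T f H \<phi> \<rho>, OF \<open>finite T\<close> assms(7,8) lin]
    by blast
  define V where "V = span ((\<lambda>(g, x). \<rho> g x) ` (carrier G \<times> p ` T))"
  have V_rep: "fin_subrep G \<rho> V"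
    unfolding V_def using fin_subrep_span_orbits assms(1-3,5) by blast
  have p_V: "p t \<in> V" if "t \<in> T" for t
    using subset_span_orbits[OF assms(1) \<rho>, of "p ` T"] that by (auto simp: V_def)
  obtain \<delta> where "\<delta> > 0" and \<delta>: "\<forall>x\<in>p ` T. \<forall>y\<in>p ` T. x \<noteq> y \<longrightarrow> \<delta> \<le> dist x y"
    using finite_set_separated[of "p ` T"] \<open>finite T\<close> by blast
  define r where "r = min 1 \<delta> / 3"
  have r: "0 < r" "r \<le> 1/2" using \<open>\<delta> > 0\<close> by (auto simp: r_def)
  have r_sep: "2 * r < norm (p s - p t)" if "s \<in> T" "t \<in> T" "s \<noteq> t" for s t
  proof -
    have "p s \<noteq> p t" using p_inj that by (auto dest: inj_onD)
    then have "\<delta> \<le> norm (p s - p t)" using \<delta> that by (simp add: dist_norm)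
    then show ?thesis using \<open>\<delta> > 0\<close> by (simp add: r_def)
  qed
  obtain e where e: "bij_betw e T {..<card T}"
    using finite_same_card_bij[of T "{..<card T}"] \<open>finite T\<close> by auto
  have e_inv: "inv_into T e i \<in> T" "e (inv_into T e i) = i" if "i < card T" for i
    using that e by (auto simp: bij_betw_def inv_into_into f_inv_into_f)
  define c where "c = map (\<lambda>i. (r, p (inv_into T e i))) [0..<card T]"
  have c_length: "length c = card T" by (simp add: c_def)
  have "c \<in> DV V (card T)"
    unfolding c_def
  proof (rule equal_disks_in_DV[OF fin_subrep_subspace[OF V_rep] r])
    show "p (inv_into T e i) \<in> V \<and> norm (p (inv_into T e i)) \<le> 1/2" if "i < card T" for i
      using p_V p_small e_inv(1)[OF that] by blast
    show "2 * r < norm (p (inv_into T e i) - p (inv_into T e j))"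
      if "i < card T" "j < card T" "i \<noteq> j" for i j
      using r_sep e_inv that by metis
  qed
  then have "c \<in> DU G \<rho> (card T)" using V_rep by (auto simp: DU_def)
  moreover have c_e: "c ! e t = (r, p t)" if "t \<in> T" for t
  proof -
    have "e t < card T" using bij_betwE[OF e] that by blast
    then show ?thesis using bij_betw_inv_into_left[OF e that] by (simp add: c_def)
  qed
  have "\<forall>h\<in>H. \<forall>t\<in>T. c ! e (\<phi> h t) = (fst (c ! e t), \<rho> h (snd (c ! e t)))"
  proof (intro ballI)
    fix h t assume "h \<in> H" "t \<in> T"
    then have "\<phi> h t \<in> T" using \<phi> by (auto dest: bij_betwE)
    then show "c ! e (\<phi> h t) = (fst (c ! e t), \<rho> h (snd (c ! e t)))"
      using c_e \<open>h \<in> H\<close> \<open>t \<in> T\<close> p_equiv by simp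
  qed
  then have "\<forall>(h, \<sigma>) \<in> Gamma_T H T e \<phi>. act_GSigma \<rho> h \<sigma> c = c"
    by (rule iffD2[OF Gamma_T_fixed_iff[OF e \<phi> c_length]])
  ultimately show ?thesis using e by (auto simp: admissible_DU_def)
qed

theorem mainTheorem8:
  fixes G :: "('g, 'm) monoid_scheme" and \<rho> :: "'g \<Rightarrow> 'u::real_inner \<Rightarrow> 'u"
    and H :: "'g set" and T :: "'t set" and \<phi> :: "'g \<Rightarrow> 't \<Rightarrow> 't"
  assumes "group G" and "finite (carrier G)" and "G_universe G \<rho>"
    and "subgroup H G"
    and "finite T" and "group_action (G\<lparr>carrier := H\<rparr>) T \<phi>"
  shows "admissible_DU G \<rho> H T \<phi> \<longleftrightarrow>
         (\<exists>f :: 't \<Rightarrow> 'u. inj_on f T \<and> (\<forall>h\<in>H. \<forall>t\<in>T. f (\<phi> h t) = \<rho> h (f t)))"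
proof -
  have \<phi>: "\<forall>h\<in>H. bij_betw (\<phi> h) T T"
    using group_action.bij_prop0[OF assms(6)] by (simp add: Bij_def)
  have "isometric_linear_action G \<rho>" using assms(3) by (simp add: G_universe_def)
  moreover have "H \<subseteq> carrier G" using assms(4) by (rule subgroup.subset)
  ultimately show ?thesis
    using equivariant_injection_of_admissible[OF _ \<phi>]
      admissible_of_equivariant_injection[OF assms(1,2) _ _ assms(5) \<phi>] by blast
qed

end
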